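(* Let $\mathfrak{F}$ be any tube $\boldsymbol{x}(u,\phi)=\boldsymbol{a}(u)+r\cos\phi\,\boldsymbol{h}(u)+r\sin\phi\,\boldsymbol{b}(u)$ in $\mathbb{E}^3$ about a regular unit-speed curve $\boldsymbol{a}$ of finite length with curvature $\kappa>0$, with $0<r<\min 1/|\kappa|$, and let $W$ be any open portion of $\mathfrak{F}$ on which $\cos\phi\neq0$ (equivalently $K\neq0$). Then there is no constant real $3\times3$ matrix $A$ such that the Gauss map $\boldsymbol{N}$ of $\mathfrak{F}$ satisfies $\Delta^{II}\boldsymbol{N}=A\boldsymbol{N}$ on $W$; i.e., every tube in $\mathbb{E}^3$ is of coordinate infinite type Gauss map with respect to the second fundamental form. *)

theory Defs
  imports "HOL-Analysis.Analysis" "HOL-Analysis.Cross3"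
begin

definition vd :: "nat \<Rightarrow> (real \<Rightarrow> 'a::real_normed_vector) \<Rightarrow> real \<Rightarrow> 'a" where
  "vd k f = ((\<lambda>g u. vector_derivative g (at u)) ^^ k) f"

definition smooth_curve_on :: "real set \<Rightarrow> (real \<Rightarrow> 'a::real_normed_vector) \<Rightarrow> bool" where
  "smooth_curve_on I f \<longleftrightarrow> (\<forall>k. \<forall>u\<in>I. vd k f differentiable (at u))"

definition curvature :: "(real \<Rightarrow> real^3) \<Rightarrow> real \<Rightarrow> real" where
  "curvature a u = norm (vd 2 a u)"

definition tangent :: "(real \<Rightarrow> real^3) \<Rightarrow> real \<Rightarrow> real^3" where
  "tangent a u = vd 1 a u"

definition principal_normal :: "(real \<Rightarrow> real^3) \<Rightarrow> real \<Rightarrow> real^3" where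
  "principal_normal a u = (1 / curvature a u) *\<^sub>R vd 2 a u"

definition binormal :: "(real \<Rightarrow> real^3) \<Rightarrow> real \<Rightarrow> real^3" where
  "binormal a u = cross3 (tangent a u) (principal_normal a u)"

definition tube :: "(real \<Rightarrow> real^3) \<Rightarrow> real \<Rightarrow> real \<Rightarrow> real \<Rightarrow> real^3" where
  "tube a r u \<phi> = a u + (r * cos \<phi>) *\<^sub>R principal_normal a u + (r * sin \<phi>) *\<^sub>R binormal a u"

definition pd_u :: "(real \<Rightarrow> real \<Rightarrow> real^3) \<Rightarrow> real \<Rightarrow> real \<Rightarrow> real^3" where
  "pd_u F u v = vector_derivative (\<lambda>s. F s v) (at u)"

definition pd_v :: "(real \<Rightarrow> real \<Rightarrow> real^3) \<Rightarrow> real \<Rightarrow> real \<Rightarrow> real^3" where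
  "pd_v F u v = vector_derivative (\<lambda>t. F u t) (at v)"

definition gauss_map :: "(real \<Rightarrow> real \<Rightarrow> real^3) \<Rightarrow> real \<Rightarrow> real \<Rightarrow> real^3" where
  "gauss_map X u v = (let c = cross3 (pd_u X u v) (pd_v X u v) in (1 / norm c) *\<^sub>R c)"

definition II_e :: "(real \<Rightarrow> real \<Rightarrow> real^3) \<Rightarrow> real \<Rightarrow> real \<Rightarrow> real" where
  "II_e X u v = pd_u (pd_u X) u v \<bullet> gauss_map X u v"

definition II_f :: "(real \<Rightarrow> real \<Rightarrow> real^3) \<Rightarrow> real \<Rightarrow> real \<Rightarrow> real" where
  "II_f X u v = pd_v (pd_u X) u v \<bullet> gauss_map X u v"

definition II_g :: "(real \<Rightarrow> real \<Rightarrow> real^3) \<Rightarrow> real \<Rightarrow> real \<Rightarrow> real" where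
  "II_g X u v = pd_v (pd_v X) u v \<bullet> gauss_map X u v"

definition II_det :: "(real \<Rightarrow> real \<Rightarrow> real^3) \<Rightarrow> real \<Rightarrow> real \<Rightarrow> real" where
  "II_det X u v = II_e X u v * II_g X u v - (II_f X u v)^2"

(* Laplace operator of the second fundamental form, applied componentwise to F:
   Delta^II F = -1/sqrt|D| * sum_ij d_i( sqrt|D| h^ij d_j F ),  (h^ij) = II^{-1} *)
definition lap_II :: "(real \<Rightarrow> real \<Rightarrow> real^3) \<Rightarrow> (real \<Rightarrow> real \<Rightarrow> real^3) \<Rightarrow> real \<Rightarrow> real \<Rightarrow> real^3" where
  "lap_II X F u v =
     - (1 / sqrt \<bar>II_det X u v\<bar>) *\<^sub>R
       ( pd_u (\<lambda>s t. (sqrt \<bar>II_det X s t\<bar> / II_det X s t) *\<^sub>R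
                 (II_g X s t *\<^sub>R pd_u F s t - II_f X s t *\<^sub>R pd_v F s t)) u v
       + pd_v (\<lambda>s t. (sqrt \<bar>II_det X s t\<bar> / II_det X s t) *\<^sub>R
                 (II_e X s t *\<^sub>R pd_v F s t - II_f X s t *\<^sub>R pd_u F s t)) u v )"

end

theory Submission
  imports Defs "HOL-Computational_Algebra.Polynomial"
begin

text \<open>
  Along the tube the Gauss map is \<open>N = - (cos \<phi> h + sin \<phi> b)\<close>, and the second fundamental
  form has coefficients \<open>e = r \<tau>\<^sup>2 - \<delta> \<kappa> cos \<phi>\<close>, \<open>f = r \<tau>\<close>, \<open>g = r\<close> with
  \<open>\<delta> = 1 - r \<kappa> cos \<phi> > 0\<close>, so \<open>det II = - r \<delta> \<kappa> cos \<phi>\<close>. For fixed \<open>u\<close>, the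
  \<open>h\<close>-component of the II-Laplacian of \<open>N\<close> is the rational function
  \<open>\<kappa> / \<delta> - cos \<phi> / r + sin\<^sup>2 \<phi> (1 - 2 r \<kappa> cos \<phi>) / (2 r \<delta> cos \<phi>)\<close> of \<open>\<phi>\<close>,
  whereas the \<open>h\<close>-component of \<open>A N\<close> is a linear combination of \<open>cos \<phi>\<close> and \<open>sin \<phi>\<close>.
  Clearing denominators and squaring away \<open>sin \<phi>\<close> turns the eigen-equation into a polynomial
  equation for \<open>cos \<phi>\<close> with constant term \<open>1\<close>, which cannot hold for the infinitely many
  values that \<open>cos \<phi>\<close> takes on an open set.
\<close>

lemma vd_0 [simp]: "vd 0 f = f"
  by (simp add: vd_def)

lemma vd_Suc: "vd (Suc k) f = (\<lambda>u. vector_derivative (vd k f) (at u))"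
  by (simp add: vd_def)

lemma has_real_derivative_inner:
  assumes "(f has_vector_derivative f') (at x)" and "(g has_vector_derivative g') (at x)"
  shows "((\<lambda>x. f x \<bullet> g x) has_real_derivative f x \<bullet> g' + f' \<bullet> g x) (at x)"
  using bounded_bilinear.has_vector_derivative[OF bounded_bilinear_inner assms]
  by (simp add: has_real_derivative_iff_has_vector_derivative)

lemma bounded_bilinear_cross3: "bounded_bilinear (cross3 :: real^3 \<Rightarrow> real^3 \<Rightarrow> real^3)"
  using bilinear_conv_bounded_bilinear bilinear_cross by blast

lemma has_vector_derivative_cross3:
  assumes "(f has_vector_derivative f') (at x)" and "(g has_vector_derivative g') (at x)"
  shows "((\<lambda>x. cross3 (f x) (g x)) has_vector_derivative cross3 (f x) g' + cross3 f' (g x)) (at x)"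
  using bounded_bilinear.has_vector_derivative[OF bounded_bilinear_cross3 assms] by simp

lemma has_real_derivative_zero_if_constant_on_open:
  assumes "(f has_real_derivative D) (at u)" and "open S" "u \<in> S" and "\<And>s. s \<in> S \<Longrightarrow> f s = c"
  shows "D = 0"
proof -
  have "(f has_real_derivative 0) (at u)"
    by (rule has_field_derivative_transform_within_open[of "\<lambda>_. c", OF _ assms(2,3)])
      (use assms(4) in auto)
  then show ?thesis using assms(1) DERIV_unique by blast
qed

lemma differentiable_transform_within_open:
  assumes "f differentiable (at u)" and "open S" "u \<in> S" and "\<And>s. s \<in> S \<Longrightarrow> f s = g s"
  shows "g differentiable (at u)"
  using assms has_derivative_transform_within_open unfolding differentiable_def by blast

lemma has_real_derivative_sqrt_abs:
  assumes f: "(f has_real_derivative f') (at x)" and nz: "f x \<noteq> 0"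
  shows "((\<lambda>y. sqrt \<bar>f y\<bar>) has_real_derivative sqrt \<bar>f x\<bar> * f' / (2 * f x)) (at x)"
proof -
  have cont: "(f \<longlongrightarrow> f x) (at x)" using DERIV_continuous[OF f] continuous_at by blast
  obtain \<sigma> :: real where \<sigma>: "\<sigma> * \<sigma> = 1" "\<bar>f x\<bar> = \<sigma> * f x"
    and ev: "\<forall>\<^sub>F y in at x. \<bar>f y\<bar> = \<sigma> * f y"
  proof (cases "f x > 0")
    case True
    with order_tendstoD(1)[OF cont] have "\<forall>\<^sub>F y in at x. f y > 0" by blast
    then show ?thesis using True by (intro that[of 1]) (auto elim: eventually_mono)
  next
    case False
    with nz have "f x < 0" by linarith
    moreover from this order_tendstoD(2)[OF cont] have "\<forall>\<^sub>F y in at x. f y < 0" by blast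
    ultimately show ?thesis by (intro that[of "-1"]) (auto elim: eventually_mono)
  qed
  have "\<forall>\<^sub>F y in at x. sqrt \<bar>f y\<bar> = sqrt (\<sigma> * f y)"
    using ev by eventually_elim simp
  moreover have "((\<lambda>y. sqrt (\<sigma> * f y)) has_real_derivative inverse (sqrt (\<sigma> * f x)) / 2 * (\<sigma> * f')) (at x)"
    by (rule DERIV_chain2[OF DERIV_real_sqrt DERIV_cmult[OF f]]) (use nz \<sigma> in simp)
  ultimately have "((\<lambda>y. sqrt \<bar>f y\<bar>) has_real_derivative inverse (sqrt (\<sigma> * f x)) / 2 * (\<sigma> * f')) (at x)"
    by (subst has_field_derivative_cong_eventually) (simp_all add: \<sigma>(2))
  moreover have "inverse (sqrt (\<sigma> * f x)) / 2 * (\<sigma> * f') = sqrt \<bar>f x\<bar> * f' / (2 * f x)"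
  proof -
    define q where "q = sqrt (\<sigma> * f x)"
    have q: "q > 0" "sqrt \<bar>f x\<bar> = q" using nz \<sigma> by (simp_all add: q_def)
    have fx: "f x = \<sigma> * (q * q)" using nz \<sigma> by (simp add: q_def flip: mult.assoc)
    have "\<sigma> \<noteq> 0" using \<sigma>(1) by auto
    have "inverse (sqrt (\<sigma> * f x)) / 2 * (\<sigma> * f') = \<sigma> * f' / (2 * q)"
      by (simp add: q_def field_simps)
    also have "\<dots> = q * f' / (2 * f x)"
      unfolding fx using q(1) \<open>\<sigma> \<noteq> 0\<close> \<sigma>(1) by (simp add: field_simps)
    finally show ?thesis unfolding q(2) .
  qed
  ultimately show ?thesis by (simp only:)
qed

lemma differentiable_sqrt_abs:
  fixes f :: "real \<Rightarrow> real"
  shows "f differentiable (at x) \<Longrightarrow> f x \<noteq> 0 \<Longrightarrow> (\<lambda>y. sqrt \<bar>f y\<bar>) differentiable (at x)"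
  using has_real_derivative_sqrt_abs real_differentiable_def by blast

lemma orthonormal_cross3_expansion:
  fixes T H v :: "real^3"
  assumes "T \<bullet> T = 1" "H \<bullet> H = 1" "T \<bullet> H = 0"
  shows "v = (v \<bullet> T) *\<^sub>R T + (v \<bullet> H) *\<^sub>R H + (v \<bullet> cross3 T H) *\<^sub>R cross3 T H"
proof -
  define B where "B = cross3 T H"
  define w where "w = v - ((v \<bullet> T) *\<^sub>R T + (v \<bullet> H) *\<^sub>R H + (v \<bullet> B) *\<^sub>R B)"
  have B: "B \<bullet> T = 0" "B \<bullet> H = 0" "T \<bullet> B = 0" "H \<bullet> B = 0" "B \<bullet> B = 1"
    using norm_cross_dot[of T H] assms unfolding B_def
    by (simp_all add: dot_cross_self inner_commute norm_eq_sqrt_inner power2_eq_square)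
  have "H \<bullet> T = 0" using assms(3) by (simp add: inner_commute)
  then have "w \<bullet> T = 0" "w \<bullet> H = 0" "w \<bullet> B = 0"
    unfolding w_def using assms B by (simp_all add: inner_diff_left inner_add_left)
  then have "cross3 w B = 0" unfolding B_def Lagrange by simp
  then have "norm w * norm B = 0" using norm_cross_dot[of w B] \<open>w \<bullet> B = 0\<close> by simp
  then have "w = 0" using B(5) by auto
  then show ?thesis unfolding w_def B_def by simp
qed

lemma infinite_cos_image_ball:
  fixes p e :: real
  assumes "0 < e"
  shows "infinite (cos ` ball p e)"
proof
  assume "finite (cos ` ball p e)"
  moreover have "connected (cos ` ball p e)"
    by (intro connected_continuous_image continuous_intros connected_ball)
  moreover have "cos ` ball p e \<noteq> {}" using assms by simp
  ultimately obtain c where c: "cos ` ball p e = {c}"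
    using connected_finite_iff_sing by blast
  define d where "d = min (e / 2) 1"
  have d: "0 < d" "d < pi" "p + d \<in> ball p e" "p - d \<in> ball p e" "p \<in> ball p e"
    using assms pi_gt3 by (auto simp: d_def dist_real_def)
  then have "cos (p + d) = cos p" "cos (p - d) = cos p" using c by (metis image_eqI singletonD)+
  moreover have "cos (p + d) + cos (p - d) = 2 * cos p * cos d"
    and "cos (p - d) - cos (p + d) = 2 * sin p * sin d"
    by (simp_all add: cos_add cos_diff)
  moreover have "cos d < 1" "sin d > 0"
    using d cos_monotone_0_pi[of 0 d] sin_gt_zero[of d] by simp_all
  ultimately have "cos p = 0" "sin p = 0" by auto
  then show False using sin_cos_squared_add[of p] by simp
qed

section \<open>The Frenet frame of a unit-speed curve\<close>

locale frenet_curve =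
  fixes a :: "real \<Rightarrow> real^3" and \<alpha> \<beta> :: real
  assumes smooth: "smooth_curve_on {\<alpha><..<\<beta>} a"
    and unit_speed: "\<forall>u\<in>{\<alpha><..<\<beta>}. norm (vd 1 a u) = 1"
    and curvature_positive: "\<forall>u\<in>{\<alpha><..<\<beta>}. curvature a u > 0"
begin

abbreviation "I \<equiv> {\<alpha><..<\<beta>}"
abbreviation "T \<equiv> tangent a"
abbreviation "H \<equiv> principal_normal a"
abbreviation "B \<equiv> binormal a"
abbreviation "\<kappa> \<equiv> curvature a"

lemma vd_has_vector_derivative: "u \<in> I \<Longrightarrow> (vd k a has_vector_derivative vd (Suc k) a u) (at u)"
  using smooth unfolding smooth_curve_on_def vd_Suc
  by (simp add: vector_derivative_works[symmetric])

lemma vd_differentiable: "u \<in> I \<Longrightarrow> vd k a differentiable (at u)"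
  using vd_has_vector_derivative differentiableI_vector by blast

lemma curvature_pos: "u \<in> I \<Longrightarrow> \<kappa> u > 0"
  using curvature_positive by blast

lemma vd2_eq_curvature_principal_normal: "u \<in> I \<Longrightarrow> vd 2 a u = \<kappa> u *\<^sub>R H u"
  using curvature_pos[of u] by (simp add: principal_normal_def)

lemma tangent_has_vector_derivative: "u \<in> I \<Longrightarrow> (T has_vector_derivative \<kappa> u *\<^sub>R H u) (at u)"
  using vd_has_vector_derivative[of u 1] vd2_eq_curvature_principal_normal[of u]
  by (simp add: tangent_def[abs_def] numeral_2_eq_2)

lemma tangent_inner_self: "u \<in> I \<Longrightarrow> T u \<bullet> T u = 1"
  using unit_speed by (simp add: tangent_def norm_eq_sqrt_inner)

lemma principal_normal_inner_self: "u \<in> I \<Longrightarrow> H u \<bullet> H u = 1"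
  using curvature_pos[of u] by (simp add: principal_normal_def curvature_def norm_eq_sqrt_inner)

lemma tangent_inner_principal_normal: "u \<in> I \<Longrightarrow> T u \<bullet> H u = 0"
proof -
  assume u: "u \<in> I"
  have "((\<lambda>s. T s \<bullet> T s) has_real_derivative T u \<bullet> (\<kappa> u *\<^sub>R H u) + (\<kappa> u *\<^sub>R H u) \<bullet> T u) (at u)"
    using tangent_has_vector_derivative[OF u] tangent_has_vector_derivative[OF u]
    by (rule has_real_derivative_inner)
  then have "T u \<bullet> (\<kappa> u *\<^sub>R H u) + (\<kappa> u *\<^sub>R H u) \<bullet> T u = 0"
    by (rule has_real_derivative_zero_if_constant_on_open[where S = I]) (use u tangent_inner_self in auto)
  then show ?thesis using curvature_pos[OF u] by (simp add: inner_commute)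
qed

lemma curvature_has_real_derivative:
  "u \<in> I \<Longrightarrow> (\<kappa> has_real_derivative (vd 2 a u \<bullet> vd 3 a u) / \<kappa> u) (at u)"
proof -
  assume u: "u \<in> I"
  have \<kappa>: "\<kappa> = (\<lambda>s. sqrt (vd 2 a s \<bullet> vd 2 a s))"
    by (auto simp: curvature_def norm_eq_sqrt_inner)
  have "((\<lambda>s. sqrt (vd 2 a s \<bullet> vd 2 a s)) has_real_derivative
      inverse (sqrt (vd 2 a u \<bullet> vd 2 a u)) / 2 * (vd 2 a u \<bullet> vd 3 a u + vd 3 a u \<bullet> vd 2 a u)) (at u)"
    using curvature_pos[OF u] vd_has_vector_derivative[OF u, of 2]
    by (intro DERIV_real_sqrt[THEN DERIV_chain2] has_real_derivative_inner)
      (simp_all add: curvature_def norm_eq_sqrt_inner numeral_3_eq_3 numeral_2_eq_2)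
  then show ?thesis
    unfolding \<kappa> by (simp add: inner_commute curvature_def norm_eq_sqrt_inner field_simps)
qed

lemma curvature_differentiable: "u \<in> I \<Longrightarrow> \<kappa> differentiable (at u)"
  using curvature_has_real_derivative real_differentiable_def by blast

definition "H' u = vector_derivative H (at u)"
definition "\<tau> u = H' u \<bullet> B u"

lemma principal_normal_has_vector_derivative_explicit:
  "u \<in> I \<Longrightarrow> (H has_vector_derivative
     (1 / \<kappa> u) *\<^sub>R vd 3 a u - ((vd 2 a u \<bullet> vd 3 a u) / \<kappa> u ^ 3) *\<^sub>R vd 2 a u) (at u)"
proof -
  assume u: "u \<in> I"
  have "((\<lambda>s. inverse (\<kappa> s)) has_real_derivative
      - ((vd 2 a u \<bullet> vd 3 a u) / \<kappa> u * inverse (\<kappa> u ^ Suc (Suc 0)))) (at u)"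
    using DERIV_inverse_fun[OF curvature_has_real_derivative[OF u]] curvature_pos[OF u] by simp
  from has_vector_derivative_scaleR[OF this vd_has_vector_derivative[OF u, of 2]]
  show ?thesis
    unfolding principal_normal_def[abs_def] using curvature_pos[OF u]
    by (simp add: divide_inverse numeral_3_eq_3 numeral_2_eq_2 power_Suc algebra_simps)
qed

lemma principal_normal_has_vector_derivative: "u \<in> I \<Longrightarrow> (H has_vector_derivative H' u) (at u)"
  unfolding H'_def using principal_normal_has_vector_derivative_explicit
  by (metis vector_derivative_at)

lemma principal_normal'_differentiable: "u \<in> I \<Longrightarrow> H' differentiable (at u)"
proof -
  assume u: "u \<in> I"
  have "(\<lambda>s. (1 / \<kappa> s) *\<^sub>R vd 3 a s - ((vd 2 a s \<bullet> vd 3 a s) / \<kappa> s ^ 3) *\<^sub>R vd 2 a s)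
      differentiable (at u)"
    using vd_differentiable[OF u] curvature_differentiable[OF u] curvature_pos[OF u]
    by (intro derivative_intros) auto
  then show ?thesis
    by (rule differentiable_transform_within_open[where S = I])
      (use u in \<open>auto simp: H'_def
        vector_derivative_at[OF principal_normal_has_vector_derivative_explicit]\<close>)
qed

lemma frenet_inner:
  assumes u: "u \<in> I"
  shows "T u \<bullet> T u = 1" "H u \<bullet> H u = 1" "B u \<bullet> B u = 1"
    "T u \<bullet> H u = 0" "H u \<bullet> T u = 0" "T u \<bullet> B u = 0" "B u \<bullet> T u = 0"
    "H u \<bullet> B u = 0" "B u \<bullet> H u = 0"
proof -
  note TH = tangent_inner_self[OF u] principal_normal_inner_self[OF u]
    tangent_inner_principal_normal[OF u]
  then show "T u \<bullet> T u = 1" "H u \<bullet> H u = 1" "T u \<bullet> H u = 0" "H u \<bullet> T u = 0"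
    by (simp_all add: inner_commute)
  show "B u \<bullet> B u = 1"
    using norm_cross_dot[of "T u" "H u"] TH unfolding binormal_def
    by (simp add: norm_eq_sqrt_inner power2_eq_square)
  show "T u \<bullet> B u = 0" "B u \<bullet> T u = 0" "H u \<bullet> B u = 0" "B u \<bullet> H u = 0"
    unfolding binormal_def by (simp_all add: dot_cross_self inner_commute)
qed

lemma frenet_cross:
  assumes u: "u \<in> I"
  shows "cross3 (T u) (H u) = B u" "cross3 (H u) (T u) = - B u"
    "cross3 (T u) (B u) = - H u" "cross3 (B u) (T u) = H u"
    "cross3 (H u) (B u) = T u" "cross3 (B u) (H u) = - T u"
proof -
  show "cross3 (T u) (H u) = B u" unfolding binormal_def ..
  then show "cross3 (H u) (T u) = - B u" by (metis cross_skew)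
  show "cross3 (T u) (B u) = - H u" "cross3 (H u) (B u) = T u"
    unfolding binormal_def Lagrange using frenet_inner[OF u] by simp_all
  then show "cross3 (B u) (T u) = H u" "cross3 (B u) (H u) = - T u"
    by (metis cross_skew minus_minus)+
qed

lemma principal_normal'_eq: "u \<in> I \<Longrightarrow> H' u = - \<kappa> u *\<^sub>R T u + \<tau> u *\<^sub>R B u"
proof -
  assume u: "u \<in> I"
  note H' = principal_normal_has_vector_derivative[OF u]
  have "((\<lambda>s. H s \<bullet> H s) has_real_derivative H u \<bullet> H' u + H' u \<bullet> H u) (at u)"
    using H' H' by (rule has_real_derivative_inner)
  then have "H u \<bullet> H' u + H' u \<bullet> H u = 0"
    by (rule has_real_derivative_zero_if_constant_on_open[where S = I])
      (use u principal_normal_inner_self in auto)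
  then have HH': "H' u \<bullet> H u = 0" by (simp add: inner_commute)
  have "((\<lambda>s. T s \<bullet> H s) has_real_derivative T u \<bullet> H' u + (\<kappa> u *\<^sub>R H u) \<bullet> H u) (at u)"
    using tangent_has_vector_derivative[OF u] H' by (rule has_real_derivative_inner)
  then have "T u \<bullet> H' u + (\<kappa> u *\<^sub>R H u) \<bullet> H u = 0"
    by (rule has_real_derivative_zero_if_constant_on_open[where S = I])
      (use u tangent_inner_principal_normal in auto)
  then have TH': "H' u \<bullet> T u = - \<kappa> u" using frenet_inner[OF u] by (simp add: inner_commute)
  have "H' u = (H' u \<bullet> T u) *\<^sub>R T u + (H' u \<bullet> H u) *\<^sub>R H u + (H' u \<bullet> B u) *\<^sub>R B u"
    unfolding binormal_def using frenet_inner(1,2,4)[OF u] by (rule orthonormal_cross3_expansion)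
  then show ?thesis unfolding HH' TH' \<tau>_def by simp
qed

lemma binormal_has_vector_derivative: "u \<in> I \<Longrightarrow> (B has_vector_derivative - \<tau> u *\<^sub>R H u) (at u)"
proof -
  assume u: "u \<in> I"
  have "(B has_vector_derivative cross3 (T u) (H' u) + cross3 (\<kappa> u *\<^sub>R H u) (H u)) (at u)"
    unfolding binormal_def[abs_def]
    using tangent_has_vector_derivative[OF u] principal_normal_has_vector_derivative[OF u]
    by (rule has_vector_derivative_cross3)
  then show ?thesis
    using frenet_cross[OF u]
    by (simp add: principal_normal'_eq[OF u] Cross3.right_diff_distrib cross_mult_left cross_mult_right)
qed

lemma frenet_differentiable:
  assumes "u \<in> I"
  shows "T differentiable (at u)" "H differentiable (at u)" "B differentiable (at u)"
    "\<kappa> differentiable (at u)" "\<tau> differentiable (at u)"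
proof -
  show "T differentiable (at u)"
    using tangent_has_vector_derivative[OF assms] by (rule differentiableI_vector)
  show "H differentiable (at u)"
    using principal_normal_has_vector_derivative[OF assms] by (rule differentiableI_vector)
  show B: "B differentiable (at u)"
    using binormal_has_vector_derivative[OF assms] by (rule differentiableI_vector)
  show "\<kappa> differentiable (at u)" using curvature_differentiable[OF assms] .
  show "\<tau> differentiable (at u)"
    unfolding \<tau>_def[abs_def] using principal_normal'_differentiable[OF assms] B by simp
qed

end

section \<open>The tube and its second fundamental form\<close>

locale tube_about_curve = frenet_curve +
  fixes r :: real
  assumes radius_pos: "0 < r"
    and radius_below_curvature_radius: "r < (INF u\<in>{\<alpha><..<\<beta>}. 1 / \<bar>curvature a u\<bar>)"
begin

abbreviation "X \<equiv> tube a r"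

lemma radius_curvature_less_1: "u \<in> I \<Longrightarrow> r * \<kappa> u < 1"
proof -
  assume u: "u \<in> I"
  have "bdd_below ((\<lambda>u. 1 / \<bar>\<kappa> u\<bar>) ` I)" by (rule bdd_belowI[of _ 0]) auto
  then have "(INF u\<in>I. 1 / \<bar>\<kappa> u\<bar>) \<le> 1 / \<bar>\<kappa> u\<bar>" using u by (rule cINF_lower)
  then have "r < 1 / \<kappa> u" using radius_below_curvature_radius curvature_pos[OF u] by simp
  then show ?thesis using curvature_pos[OF u] by (simp add: field_simps)
qed

definition "\<delta> u t = 1 - r * \<kappa> u * cos t"

lemma \<delta>_pos: "u \<in> I \<Longrightarrow> 0 < \<delta> u t"
proof -
  assume u: "u \<in> I"
  have "r * \<kappa> u * cos t \<le> r * \<kappa> u"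
    using radius_pos curvature_pos[OF u] by (simp add: mult_left_le)
  then show ?thesis using radius_curvature_less_1[OF u] by (simp add: \<delta>_def)
qed

definition "N u t = - (cos t *\<^sub>R H u + sin t *\<^sub>R B u)"
definition "Nv u t = sin t *\<^sub>R H u - cos t *\<^sub>R B u"
definition "Nu u t = (\<kappa> u * cos t) *\<^sub>R T u + \<tau> u *\<^sub>R Nv u t"
definition "Xu u t = \<delta> u t *\<^sub>R T u - (r * \<tau> u) *\<^sub>R Nv u t"

lemma tube_frame_inner:
  assumes "u \<in> I"
  shows "N u t \<bullet> N u t = 1" "Nv u t \<bullet> Nv u t = 1" "N u t \<bullet> Nv u t = 0" "Nv u t \<bullet> N u t = 0"
    "T u \<bullet> N u t = 0" "N u t \<bullet> T u = 0" "T u \<bullet> Nv u t = 0" "Nv u t \<bullet> T u = 0"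
    "N u t \<bullet> H u = - cos t" "Nv u t \<bullet> H u = sin t"
  using frenet_inner[OF assms] sin_cos_squared_add[of t] unfolding N_def Nv_def
  by (simp_all add: inner_add_left inner_add_right inner_diff_left inner_diff_right
      algebra_simps flip: power2_eq_square)

lemma normal_has_vector_derivative_v: "((\<lambda>t. N u t) has_vector_derivative Nv u t) (at t)"
  unfolding N_def Nv_def by (auto intro!: derivative_eq_intros simp: algebra_simps)

lemma Nv_has_vector_derivative_v: "((\<lambda>t. Nv u t) has_vector_derivative - N u t) (at t)"
  unfolding N_def Nv_def by (auto intro!: derivative_eq_intros simp: algebra_simps)

lemma normal_has_vector_derivative_u:
  "u \<in> I \<Longrightarrow> ((\<lambda>s. N s t) has_vector_derivative Nu u t) (at u)"
  unfolding N_def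
  using principal_normal_has_vector_derivative binormal_has_vector_derivative
  by (auto intro!: derivative_eq_intros
      simp: principal_normal'_eq Nu_def Nv_def algebra_simps)

lemma tube_has_vector_derivative_u:
  "u \<in> I \<Longrightarrow> ((\<lambda>s. X s t) has_vector_derivative Xu u t) (at u)"
  unfolding tube_def[abs_def]
  using vd_has_vector_derivative[of u 0] principal_normal_has_vector_derivative
    binormal_has_vector_derivative
  by (auto intro!: derivative_eq_intros
      simp: tangent_def principal_normal'_eq Xu_def Nv_def \<delta>_def algebra_simps)

lemma pd_u_tube: "u \<in> I \<Longrightarrow> pd_u X u t = Xu u t"
  unfolding pd_u_def using tube_has_vector_derivative_u by (rule vector_derivative_at)

lemma pd_v_tube: "pd_v X u t = - r *\<^sub>R Nv u t"
proof -
  have "((\<lambda>t. X u t) has_vector_derivative - r *\<^sub>R Nv u t) (at t)"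
    unfolding tube_def Nv_def by (auto intro!: derivative_eq_intros simp: algebra_simps)
  then show ?thesis unfolding pd_v_def by (rule vector_derivative_at)
qed

lemma gauss_map_tube: "u \<in> I \<Longrightarrow> gauss_map X u t = N u t"
proof -
  assume u: "u \<in> I"
  have "cross3 (T u) (Nv u t) = - N u t"
    using frenet_cross[OF u] unfolding N_def Nv_def
    by (simp add: Cross3.right_diff_distrib cross_mult_right)
  then have "cross3 (pd_u X u t) (pd_v X u t) = (r * \<delta> u t) *\<^sub>R N u t"
    unfolding pd_u_tube[OF u] pd_v_tube Xu_def
    by (simp add: Cross3.left_diff_distrib cross_mult_left cross_mult_right)
  moreover have "norm (N u t) = 1" using tube_frame_inner(1)[OF u] by (simp add: norm_eq_sqrt_inner)
  ultimately show ?thesis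
    unfolding gauss_map_def Let_def using radius_pos \<delta>_pos[OF u, of t] by simp
qed

lemma gauss_map_has_vector_derivative_u:
  "u \<in> I \<Longrightarrow> ((\<lambda>s. gauss_map X s t) has_vector_derivative Nu u t) (at u)"
  by (rule has_vector_derivative_transform_within_open[OF normal_has_vector_derivative_u,
        where S = I]) (use gauss_map_tube in auto)

lemma pd_u_gauss_map: "u \<in> I \<Longrightarrow> pd_u (gauss_map X) u t = Nu u t"
  unfolding pd_u_def using gauss_map_has_vector_derivative_u by (rule vector_derivative_at)

lemma pd_v_gauss_map: "u \<in> I \<Longrightarrow> pd_v (gauss_map X) u t = Nv u t"
proof -
  assume "u \<in> I"
  then have "gauss_map X u = N u" using gauss_map_tube by auto
  then show ?thesis
    unfolding pd_v_def using normal_has_vector_derivative_v by (simp add: vector_derivative_at)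
qed

lemma II_g_tube: "u \<in> I \<Longrightarrow> II_g X u t = r"
proof -
  assume u: "u \<in> I"
  have "((\<lambda>t. pd_v X u t) has_vector_derivative r *\<^sub>R N u t) (at t)"
    unfolding pd_v_tube using Nv_has_vector_derivative_v
    by (auto intro!: derivative_eq_intros)
  then have "pd_v (pd_v X) u t = r *\<^sub>R N u t"
    unfolding pd_v_def[of "pd_v X"] by (rule vector_derivative_at)
  then show ?thesis unfolding II_g_def gauss_map_tube[OF u] using tube_frame_inner[OF u] by simp
qed

lemma II_f_tube: "u \<in> I \<Longrightarrow> II_f X u t = r * \<tau> u"
proof -
  assume u: "u \<in> I"
  have "((\<lambda>t. pd_u X u t) has_vector_derivative
      (r * \<kappa> u * sin t) *\<^sub>R T u + (r * \<tau> u) *\<^sub>R N u t) (at t)"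
    unfolding pd_u_tube[OF u] Xu_def \<delta>_def using Nv_has_vector_derivative_v
    by (auto intro!: derivative_eq_intros)
  then have "pd_v (pd_u X) u t = (r * \<kappa> u * sin t) *\<^sub>R T u + (r * \<tau> u) *\<^sub>R N u t"
    unfolding pd_v_def[of "pd_u X"] by (rule vector_derivative_at)
  then show ?thesis
    unfolding II_f_def gauss_map_tube[OF u] using tube_frame_inner[OF u] by (simp add: inner_add_left)
qed

lemma II_e_tube: "u \<in> I \<Longrightarrow> II_e X u t = r * (\<tau> u)\<^sup>2 - \<delta> u t * \<kappa> u * cos t"
proof -
  assume u: "u \<in> I"
  have "(\<lambda>s. Xu s t) differentiable (at u)"
    unfolding Xu_def \<delta>_def Nv_def using frenet_differentiable[OF u] by (intro derivative_intros) auto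
  then have "(\<lambda>s. pd_u X s t) differentiable (at u)"
    by (rule differentiable_transform_within_open[where S = I]) (use u pd_u_tube in auto)
  then have "((\<lambda>s. pd_u X s t) has_vector_derivative pd_u (pd_u X) u t) (at u)"
    unfolding pd_u_def[of "pd_u X"] by (simp add: vector_derivative_works[symmetric])
  txt \<open>Since \<open>X\<^sub>u \<bullet> N = 0\<close> identically, \<open>e = X\<^sub>u\<^sub>u \<bullet> N = - X\<^sub>u \<bullet> N\<^sub>u\<close>.\<close>
  then have "((\<lambda>s. pd_u X s t \<bullet> gauss_map X s t) has_real_derivative
      pd_u X u t \<bullet> Nu u t + pd_u (pd_u X) u t \<bullet> gauss_map X u t) (at u)"
    using gauss_map_has_vector_derivative_u[OF u] by (rule has_real_derivative_inner)
  then have "pd_u X u t \<bullet> Nu u t + pd_u (pd_u X) u t \<bullet> gauss_map X u t = 0"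
    by (rule has_real_derivative_zero_if_constant_on_open[where S = I])
      (use u tube_frame_inner in \<open>auto simp: pd_u_tube gauss_map_tube Xu_def inner_diff_left\<close>)
  moreover have "Xu u t \<bullet> Nu u t = \<delta> u t * \<kappa> u * cos t - r * (\<tau> u)\<^sup>2"
    using tube_frame_inner[OF u] frenet_inner(1)[OF u] unfolding Xu_def Nu_def
    by (simp add: inner_diff_left inner_add_right power2_eq_square)
  ultimately show ?thesis unfolding II_e_def pd_u_tube[OF u] by simp
qed

lemma II_det_tube: "u \<in> I \<Longrightarrow> II_det X u t = - (r * \<delta> u t * \<kappa> u * cos t)"
  unfolding II_det_def by (simp add: II_e_tube II_f_tube II_g_tube algebra_simps power2_eq_square)

section \<open>The Laplacian of the second fundamental form on the Gauss map\<close>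

definition "II_density u t = sqrt \<bar>II_det X u t\<bar>"

definition "flux_u u t = (II_density u t / II_det X u t) *\<^sub>R
  (II_g X u t *\<^sub>R pd_u (gauss_map X) u t - II_f X u t *\<^sub>R pd_v (gauss_map X) u t)"

definition "flux_v u t = (II_density u t / II_det X u t) *\<^sub>R
  (II_e X u t *\<^sub>R pd_v (gauss_map X) u t - II_f X u t *\<^sub>R pd_u (gauss_map X) u t)"

lemma lap_II_eq_flux:
  "lap_II X (gauss_map X) u t = - (1 / II_density u t) *\<^sub>R (pd_u flux_u u t + pd_v flux_v u t)"
  unfolding lap_II_def flux_u_def[abs_def] flux_v_def[abs_def] II_density_def ..

text \<open>
  The next two formulas also hold where \<open>cos t = 0\<close>: there \<open>II_det\<close> vanishes, and
  with \<open>x / 0 = 0\<close> both sides are \<open>0\<close>.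
\<close>

lemma flux_u_tube: "u \<in> I \<Longrightarrow> flux_u u t = - (II_density u t / \<delta> u t) *\<^sub>R T u"
proof -
  assume u: "u \<in> I"
  have "II_g X u t *\<^sub>R pd_u (gauss_map X) u t - II_f X u t *\<^sub>R pd_v (gauss_map X) u t
      = (r * \<kappa> u * cos t) *\<^sub>R T u"
    using u by (simp add: II_g_tube II_f_tube pd_u_gauss_map pd_v_gauss_map Nu_def algebra_simps)
  moreover have "II_density u t / II_det X u t * (r * \<kappa> u * cos t) = - (II_density u t / \<delta> u t)"
    using radius_pos curvature_pos[OF u] \<delta>_pos[OF u, of t]
    by (cases "cos t = 0") (simp_all add: II_density_def II_det_tube[OF u] field_simps)
  ultimately show ?thesis unfolding flux_u_def by simp
qed

lemma flux_v_tube: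
  "u \<in> I \<Longrightarrow> flux_v u t = (II_density u t / r) *\<^sub>R Nv u t + (II_density u t * \<tau> u / \<delta> u t) *\<^sub>R T u"
proof -
  assume u: "u \<in> I"
  have "II_e X u t *\<^sub>R pd_v (gauss_map X) u t - II_f X u t *\<^sub>R pd_u (gauss_map X) u t
      = (- (\<delta> u t * \<kappa> u * cos t)) *\<^sub>R Nv u t + (- (r * \<tau> u * \<kappa> u * cos t)) *\<^sub>R T u"
    using u by (simp add: II_e_tube II_f_tube pd_u_gauss_map pd_v_gauss_map Nu_def
        algebra_simps power2_eq_square)
  moreover have "II_density u t / II_det X u t * (- (\<delta> u t * \<kappa> u * cos t)) = II_density u t / r"
    and "II_density u t / II_det X u t * (- (r * \<tau> u * \<kappa> u * cos t)) = II_density u t * \<tau> u / \<delta> u t"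
    using radius_pos curvature_pos[OF u] \<delta>_pos[OF u, of t]
    by (cases "cos t = 0"; simp add: II_density_def II_det_tube[OF u] field_simps)+
  ultimately show ?thesis unfolding flux_v_def by (simp only: scaleR_add_right scaleR_scaleR)
qed

lemma II_det_differentiable_u: "u \<in> I \<Longrightarrow> (\<lambda>s. II_det X s t) differentiable (at u)"
proof -
  assume u: "u \<in> I"
  have "(\<lambda>s. - (r * \<delta> s t * \<kappa> s * cos t)) differentiable (at u)"
    unfolding \<delta>_def using frenet_differentiable(4)[OF u] by (intro derivative_intros) auto
  then show ?thesis
    by (rule differentiable_transform_within_open[where S = I]) (use u II_det_tube in auto)
qed

lemma II_det_has_real_derivative_v:
  "u \<in> I \<Longrightarrow> ((\<lambda>t. II_det X u t) has_real_derivative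
     r * \<kappa> u * sin t * (1 - 2 * r * \<kappa> u * cos t)) (at t)"
  unfolding II_det_tube \<delta>_def
  by (auto intro!: derivative_eq_intros simp: algebra_simps power2_eq_square)

lemma pd_u_flux_u_inner_principal_normal:
  assumes u: "u \<in> I" and c: "cos t \<noteq> 0"
  shows "pd_u flux_u u t \<bullet> H u = - II_density u t * \<kappa> u / \<delta> u t"
proof -
  have "II_det X u t \<noteq> 0"
    using radius_pos curvature_pos[OF u] \<delta>_pos[OF u, of t] c by (simp add: II_det_tube[OF u])
  then have "(\<lambda>s. II_density s t) differentiable (at u)"
    unfolding II_density_def using II_det_differentiable_u[OF u] by (intro differentiable_sqrt_abs)
  then have "(\<lambda>s. - (II_density s t / \<delta> s t)) differentiable (at u)"
    unfolding \<delta>_def using frenet_differentiable(4)[OF u] \<delta>_pos[OF u, of t]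
    by (intro derivative_intros) (auto simp: \<delta>_def intro: differentiableI[OF DERIV_cos[unfolded has_field_derivative_def]])
  then obtain w' where "((\<lambda>s. - (II_density s t / \<delta> s t)) has_real_derivative w') (at u)"
    using real_differentiable_def by blast
  from has_vector_derivative_scaleR[OF this tangent_has_vector_derivative[OF u]]
  have "((\<lambda>s. flux_u s t) has_vector_derivative
      (- (II_density u t / \<delta> u t)) *\<^sub>R (\<kappa> u *\<^sub>R H u) + w' *\<^sub>R T u) (at u)"
    by (rule has_vector_derivative_transform_within_open[where S = I]) (use u flux_u_tube in auto)
  then have "pd_u flux_u u t = (- (II_density u t / \<delta> u t)) *\<^sub>R (\<kappa> u *\<^sub>R H u) + w' *\<^sub>R T u"
    unfolding pd_u_def by (rule vector_derivative_at)
  then show ?thesis using frenet_inner[OF u] by (simp add: inner_diff_left)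
qed

lemma pd_v_flux_v_inner_principal_normal:
  assumes u: "u \<in> I" and c: "cos t \<noteq> 0"
  shows "pd_v flux_v u t \<bullet> H u = II_density u t *
    (r * \<kappa> u * sin t * (1 - 2 * r * \<kappa> u * cos t) * sin t / (2 * II_det X u t) + cos t) / r"
proof -
  define m' where "m' = II_density u t * (r * \<kappa> u * sin t * (1 - 2 * r * \<kappa> u * cos t))
    / (2 * II_det X u t)"
  have "II_det X u t \<noteq> 0"
    using radius_pos curvature_pos[OF u] \<delta>_pos[OF u, of t] c by (simp add: II_det_tube[OF u])
  from has_real_derivative_sqrt_abs[OF II_det_has_real_derivative_v[OF u] this]
  have m': "((\<lambda>t. II_density u t) has_real_derivative m') (at t)"
    unfolding II_density_def[abs_def] m'_def .
  then have "(\<lambda>t. II_density u t) differentiable (at t)"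
    using real_differentiable_def by blast
  then have "(\<lambda>t. II_density u t * \<tau> u / \<delta> u t) differentiable (at t)"
    using \<delta>_pos[OF u, of t] unfolding \<delta>_def
    by (intro derivative_intros)
      (auto simp: \<delta>_def intro: differentiableI[OF DERIV_cos[unfolded has_field_derivative_def]])
  then obtain p' where p': "((\<lambda>t. II_density u t * \<tau> u / \<delta> u t) has_real_derivative p') (at t)"
    using real_differentiable_def by blast
  have "((\<lambda>t. flux_v u t) has_vector_derivative
      ((II_density u t / r) *\<^sub>R (- N u t) + (m' / r) *\<^sub>R Nv u t)
      + ((II_density u t * \<tau> u / \<delta> u t) *\<^sub>R 0 + p' *\<^sub>R T u)) (at t)"
    unfolding flux_v_tube[OF u]
    by (intro has_vector_derivative_add has_vector_derivative_scaleR DERIV_cdivide m' p'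
        Nv_has_vector_derivative_v has_vector_derivative_const)
  then have "pd_v flux_v u t = ((II_density u t / r) *\<^sub>R (- N u t) + (m' / r) *\<^sub>R Nv u t)
      + ((II_density u t * \<tau> u / \<delta> u t) *\<^sub>R 0 + p' *\<^sub>R T u)"
    unfolding pd_v_def by (rule vector_derivative_at)
  then have "pd_v flux_v u t \<bullet> H u = II_density u t / r * cos t + m' / r * sin t"
    using frenet_inner[OF u] tube_frame_inner[OF u] by (simp add: inner_add_left inner_diff_left)
  then show ?thesis by (simp add: m'_def algebra_simps add_divide_distrib)
qed


lemma lap_II_gauss_map_inner_principal_normal:
  assumes u: "u \<in> I" and c: "cos t \<noteq> 0"
  shows "lap_II X (gauss_map X) u t \<bullet> H u =
    \<kappa> u / \<delta> u t - cos t / r + (sin t)\<^sup>2 * (1 - 2 * r * \<kappa> u * cos t) / (2 * r * \<delta> u t * cos t)"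
proof -
  have nz: "r \<noteq> 0" "\<kappa> u \<noteq> 0" "\<delta> u t \<noteq> 0"
    using radius_pos curvature_pos[OF u] \<delta>_pos[OF u, of t] by auto
  then have "II_density u t \<noteq> 0" using c by (simp add: II_density_def II_det_tube[OF u])
  then have "lap_II X (gauss_map X) u t \<bullet> H u = \<kappa> u / \<delta> u t
      - (r * \<kappa> u * sin t * (1 - 2 * r * \<kappa> u * cos t) * sin t / (2 * II_det X u t) + cos t) / r"
    unfolding lap_II_eq_flux inner_scaleR_left inner_add_left
      pd_u_flux_u_inner_principal_normal[OF u c] pd_v_flux_v_inner_principal_normal[OF u c]
    by (simp add: field_simps)
  also have "\<dots> = \<kappa> u / \<delta> u t - cos t / r
      + (sin t)\<^sup>2 * (1 - 2 * r * \<kappa> u * cos t) / (2 * r * \<delta> u t * cos t)"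
    using nz c by (simp add: II_det_tube[OF u] field_simps power2_eq_square)
  finally show ?thesis .
qed

end

text \<open>
  With \<open>k = r \<kappa>\<close>, \<open>a = r (A h \<bullet> h)\<close> and \<open>b = r (A b \<bullet> h)\<close>, the \<open>h\<close>-component
  of the II-Laplacian equation \<open>\<Delta> N = A N\<close>, multiplied by \<open>2 r \<delta> cos \<phi>\<close> reads
  \<open>p (cos \<phi>) = - q (cos \<phi>) sin \<phi>\<close>; this polynomial is \<open>p\<^sup>2 - q\<^sup>2 (1 - x\<^sup>2)\<close>.
\<close>

definition tube_eigen_poly :: "real \<Rightarrow> real \<Rightarrow> real \<Rightarrow> real poly" where
  "tube_eigen_poly k a b =
    (let x = [:0, 1:]; d = [:1, - k:];
         p = smult (2 * k) x - smult 2 (x\<^sup>2 * d) + (1 - x\<^sup>2) * (1 - smult (2 * k) x)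
             + smult (2 * a) (x\<^sup>2 * d);
         q = smult (2 * b) (x * d)
     in p\<^sup>2 - q\<^sup>2 * (1 - x\<^sup>2))"

lemma poly_tube_eigen_poly:
  "poly (tube_eigen_poly k a b) c =
     (2 * k * c - 2 * c\<^sup>2 * (1 - k * c) + (1 - c\<^sup>2) * (1 - 2 * k * c) + 2 * a * c\<^sup>2 * (1 - k * c))\<^sup>2
     - (2 * b * c * (1 - k * c))\<^sup>2 * (1 - c\<^sup>2)"
  by (simp add: tube_eigen_poly_def Let_def algebra_simps)

lemma tube_eigen_poly_nonzero: "tube_eigen_poly k a b \<noteq> 0"
proof
  assume "tube_eigen_poly k a b = 0"
  then have "poly (tube_eigen_poly k a b) 0 = 0" by simp
  then show False by (simp add: poly_tube_eigen_poly)
qed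

context tube_about_curve
begin

lemma tube_eigen_poly_cos_root:
  assumes u: "u \<in> I" and c: "cos t \<noteq> 0"
    and eigen: "lap_II X (gauss_map X) u t = A *v gauss_map X u t"
  shows "poly (tube_eigen_poly (r * \<kappa> u) (r * ((A *v H u) \<bullet> H u)) (r * ((A *v B u) \<bullet> H u)))
    (cos t) = 0"
proof -
  define k where "k = r * \<kappa> u"
  define p where "p = (A *v H u) \<bullet> H u"
  define q where "q = (A *v B u) \<bullet> H u"
  have \<delta>: "\<delta> u t = 1 - k * cos t" by (simp add: \<delta>_def k_def)
  have nz: "r \<noteq> 0" "\<delta> u t \<noteq> 0" using radius_pos \<delta>_pos[OF u, of t] by auto
  have "(A *v gauss_map X u t) \<bullet> H u = - (cos t * p + sin t * q)"
    unfolding gauss_map_tube[OF u] N_def p_def q_def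
    by (simp add: vec.neg vec.add vec.diff matrix_vector_mult_scaleR inner_add_left inner_diff_left)
  with eigen have eq: "\<kappa> u / \<delta> u t - cos t / r
      + (sin t)\<^sup>2 * (1 - 2 * r * \<kappa> u * cos t) / (2 * r * \<delta> u t * cos t) = - (cos t * p + sin t * q)"
    using lap_II_gauss_map_inner_principal_normal[OF u c] by simp
  have "2 * r * \<delta> u t * cos t * (\<kappa> u / \<delta> u t - cos t / r
      + (sin t)\<^sup>2 * (1 - 2 * r * \<kappa> u * cos t) / (2 * r * \<delta> u t * cos t))
      = 2 * k * cos t - 2 * (cos t)\<^sup>2 * \<delta> u t + (sin t)\<^sup>2 * (1 - 2 * k * cos t)"
    using nz c unfolding k_def by (simp add: field_simps power2_eq_square)
  then have "2 * k * cos t - 2 * (cos t)\<^sup>2 * \<delta> u t + (sin t)\<^sup>2 * (1 - 2 * k * cos t)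
      = - 2 * r * \<delta> u t * cos t * (cos t * p + sin t * q)"
    unfolding eq by (simp add: algebra_simps)
  then have "2 * k * cos t - 2 * (cos t)\<^sup>2 * (1 - k * cos t) + (1 - (cos t)\<^sup>2) * (1 - 2 * k * cos t)
      + 2 * (r * p) * (cos t)\<^sup>2 * (1 - k * cos t) = - (2 * (r * q) * cos t * (1 - k * cos t)) * sin t"
    unfolding \<delta> sin_squared_eq by (simp add: algebra_simps power2_eq_square)
  then show ?thesis
    unfolding poly_tube_eigen_poly k_def[symmetric] p_def[symmetric] q_def[symmetric]
    by (simp add: power_mult_distrib sin_squared_eq)
qed

end

theorem theorem1:
  fixes a :: "real \<Rightarrow> real^3" and \<alpha> \<beta> r :: real and W :: "(real \<times> real) set"
  assumes "\<alpha> < \<beta>"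
    and "smooth_curve_on {\<alpha><..<\<beta>} a"
    and "\<forall>u\<in>{\<alpha><..<\<beta>}. norm (vd 1 a u) = 1"
    and "\<forall>u\<in>{\<alpha><..<\<beta>}. curvature a u > 0"
    and "0 < r"
    and "r < (INF u\<in>{\<alpha><..<\<beta>}. 1 / \<bar>curvature a u\<bar>)"
    and "open W" and "W \<noteq> {}"
    and "\<forall>(u, \<phi>)\<in>W. \<alpha> < u \<and> u < \<beta> \<and> cos \<phi> \<noteq> 0"
  shows "\<not> (\<exists>A :: real^3^3. \<forall>(u, \<phi>)\<in>W.
            lap_II (tube a r) (gauss_map (tube a r)) u \<phi> = A *v gauss_map (tube a r) u \<phi>)"
proof
  interpret tube_about_curve a \<alpha> \<beta> r using assms by unfold_locales auto
  assume "\<exists>A :: real^3^3. \<forall>(u, \<phi>)\<in>W. lap_II X (gauss_map X) u \<phi> = A *v gauss_map X u \<phi>"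
  then obtain A :: "real^3^3" where A: "\<forall>(u, \<phi>)\<in>W. lap_II X (gauss_map X) u \<phi> = A *v gauss_map X u \<phi>"
    by blast
  obtain u \<phi>\<^sub>0 where "(u, \<phi>\<^sub>0) \<in> W" using \<open>W \<noteq> {}\<close> by auto
  then obtain e where e: "0 < e" "ball (u, \<phi>\<^sub>0) e \<subseteq> W"
    using \<open>open W\<close> open_contains_ball by blast
  have W: "(u, \<phi>) \<in> W" if "\<phi> \<in> ball \<phi>\<^sub>0 e" for \<phi>
    using that e(2) by (auto simp: dist_Pair_Pair dist_commute)
  define P where "P = tube_eigen_poly (r * \<kappa> u) (r * ((A *v H u) \<bullet> H u)) (r * ((A *v B u) \<bullet> H u))"
  have "cos ` ball \<phi>\<^sub>0 e \<subseteq> {c. poly P c = 0}"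
    using W A assms(9) unfolding P_def by (fastforce intro: tube_eigen_poly_cos_root)
  moreover have "finite {c. poly P c = 0}"
    unfolding P_def by (rule poly_roots_finite[OF tube_eigen_poly_nonzero])
  ultimately show False using infinite_cos_image_ball[OF e(1)] finite_subset by blast
qed

end
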